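(* Let $C\in\mathbb{R}^{n\times n}$ be symmetric and let $Z$ be an optimal solution of $$\max_{Z}\ \langle C,Z\rangle\quad\text{s.t. } Z_{ii}=1\ (i=1,\dots,n),\ Z\succeq0.$$ Define $w\in\mathbb{R}^n$ by $w_i=\dfrac{Z_i^TZC_i}{Z_i^TZ_i}$ for $i=1,\dots,n$. Then $w$ is an optimal solution of $$\min_{w\in\mathbb{R}^n}\ \mathbf{1}^Tw\quad\text{s.t. } \operatorname{Diag}(w)\succeq C.$$
   Context: $Z_i$ and $C_i$ denote the $i$-th columns of $Z$ and $C$ (equivalently rows, by symmetry); $\operatorname{Diag}(w)$ is the diagonal matrix with diagonal $w$; $\langle C,Z\rangle=\operatorname{tr}(CZ)$; $\mathbf 1$ is the all-ones vector. *)

theory Defs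
  imports "HOL-Analysis.Analysis"
begin

definition psd :: "real^'n^'n \<Rightarrow> bool" where
  "psd A \<longleftrightarrow> transpose A = A \<and> (\<forall>x. 0 \<le> x \<bullet> (A *v x))"

definition Diag :: "real^'n \<Rightarrow> real^'n^'n" where
  "Diag w = (\<chi> i j. if i = j then w $ i else 0)"

text \<open>Frobenius inner product of symmetric matrices, as tr(CZ).\<close>
definition frob :: "real^'n^'n \<Rightarrow> real^'n^'n \<Rightarrow> real" where
  "frob C Z = trace (C ** Z)"

definition sdp_feasible :: "real^'n^'n \<Rightarrow> bool" where
  "sdp_feasible Z \<longleftrightarrow> (\<forall>i. Z $ i $ i = 1) \<and> psd Z"

end

theory Submission
  imports Defs
begin

text \<open>
  Perturbing the optimal \<open>Z\<close> along the feasible curve \<open>t \<mapsto> D\<^sub>t Z D\<^sub>t + t x x\<^sup>T\<close>, where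
  \<open>D\<^sub>t\<close> is diagonal with entries \<open>sqrt (1 - t x\<^sub>i\<^sup>2)\<close>, gives at first order
  \<open>x\<^sup>T C x \<le> \<Sum>\<^sub>i \<mu>\<^sub>i x\<^sub>i\<^sup>2\<close> with \<open>\<mu>\<^sub>i = (CZ)\<^sub>i\<^sub>i\<close>, i.e. \<open>Diag \<mu> - C\<close> is psd.
  As \<open>Z\<^sub>i\<^sub>i = 1\<close>, the pairing \<open>\<langle>Diag \<mu> - C, Z\<rangle> = \<Sum>\<^sub>i \<mu>\<^sub>i - \<langle>C, Z\<rangle>\<close> vanishes, and the
  pairing of two psd matrices vanishes only if their product does. Hence \<open>CZ = Diag \<mu> Z\<close>,
  i.e. \<open>Z C\<^sub>i = \<mu>\<^sub>i Z\<^sub>i\<close>, which makes \<open>w = \<mu>\<close>. Optimality is weak duality: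
  \<open>0 \<le> \<langle>Diag v - C, Z\<rangle> = \<Sum>\<^sub>i v\<^sub>i - \<Sum>\<^sub>i \<mu>\<^sub>i\<close>. Both facts about the pairing come from a
  Gram factorisation \<open>Z = \<Sum>\<^sub>m u\<^sub>m u\<^sub>m\<^sup>T\<close>, built by repeatedly splitting off a Schur complement.
\<close>

lemma inner_matrix_vector_mult_sum:
  "x \<bullet> (A *v y) = (\<Sum>i\<in>UNIV. \<Sum>j\<in>UNIV. x$i * A$i$j * y$j)"
  by (simp add: inner_vec_def matrix_vector_mult_def sum_distrib_left mult.assoc)

lemma symmetric_matrix_entry: "transpose A = A \<Longrightarrow> A$i$j = A$j$i"
  by (metis transpose_def vec_lambda_beta)

lemma psd_symmetric_entry: "psd A \<Longrightarrow> A$i$j = A$j$i"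
  unfolding psd_def by (metis symmetric_matrix_entry)

lemma symmetric_bilinear_commute:
  fixes A :: "real^'n^'n"
  assumes "transpose A = A"
  shows "x \<bullet> (A *v y) = y \<bullet> (A *v x)"
  by (metis assms dot_lmul_matrix inner_commute transpose_matrix_vector)

lemma symmetric_quadratic_form_add:
  fixes A :: "real^'n^'n"
  assumes "transpose A = A"
  shows "(x + y) \<bullet> (A *v (x + y)) = x \<bullet> (A *v x) + 2 * (y \<bullet> (A *v x)) + y \<bullet> (A *v y)"
  using symmetric_bilinear_commute[OF assms, of x y]
  by (simp add: matrix_vector_right_distrib inner_add_left inner_add_right)

lemma quadratic_form_scaleR:
  "(c *\<^sub>R x) \<bullet> ((A::real^'n^'n) *v (c *\<^sub>R y)) = c * c * (x \<bullet> (A *v y))"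
  by (simp add: inner_matrix_vector_mult_sum sum_distrib_left algebra_simps)

lemma quadratic_form_axis: "axis k 1 \<bullet> ((A::real^'n^'n) *v axis k 1) = A$k$k"
  by (simp add: matrix_vector_mult_basis inner_axis' column_def)

lemma quadratic_form_Diag: "x \<bullet> (Diag v *v x) = (\<Sum>i\<in>UNIV. v$i * (x$i)\<^sup>2)"
  by (simp add: inner_matrix_vector_mult_sum Diag_def if_distrib if_distribR power2_eq_square
      algebra_simps cong: if_cong)

lemma Diag_mult_matrix_entry: "(Diag v ** A)$i$j = v$i * A$i$j"
  by (simp add: Diag_def matrix_matrix_mult_def if_distrib if_distribR cong: if_cong)

lemma transpose_Diag_minus:
  "transpose C = C \<Longrightarrow> transpose (Diag v - C) = Diag v - C"
  by (auto simp: vec_eq_iff transpose_def Diag_def dest: symmetric_matrix_entry)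

lemma psd_diagonal_nonneg: "psd A \<Longrightarrow> 0 \<le> A$k$k"
  by (metis psd_def quadratic_form_axis)

lemma psd_quadratic_form_eq_0_imp_kernel:
  assumes A: "psd A" and x: "x \<bullet> (A *v x) = 0"
  shows "A *v x = 0"
proof (rule ccontr)
  define y where "y = A *v x"
  define c where "c = y \<bullet> (A *v y)"
  assume "A *v x \<noteq> 0"
  then have yy: "0 < y \<bullet> y" by (simp add: y_def)
  have c: "0 \<le> c" using A by (simp add: psd_def c_def)
  define t where "t = (y \<bullet> y) / (c + 1)"
  have t: "0 < t" "t * c < 2 * (y \<bullet> y)"
    using yy c by (auto simp: t_def field_simps intro!: add_nonneg_pos)
  have symA: "transpose A = A" using A by (simp add: psd_def)
  have "0 \<le> (x + (-t) *\<^sub>R y) \<bullet> (A *v (x + (-t) *\<^sub>R y))" using A by (simp add: psd_def)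
  also have "\<dots> = x \<bullet> (A *v x) + 2 * (((-t) *\<^sub>R y) \<bullet> (A *v x)) + t * t * c"
    unfolding symmetric_quadratic_form_add[OF symA] quadratic_form_scaleR c_def by simp
  also have "\<dots> = t * (t * c - 2 * (y \<bullet> y))"
    using x by (simp add: y_def[symmetric] algebra_simps)
  also have "\<dots> < 0" using t by (simp add: mult_pos_neg)
  finally show False by simp
qed

lemma psd_diagonal_eq_0_imp_row_eq_0:
  assumes "psd A" "A$k$k = 0"
  shows "A$k$j = 0"
proof -
  have "column k A = 0"
    using psd_quadratic_form_eq_0_imp_kernel[OF assms(1)] quadratic_form_axis assms(2)
    by (metis matrix_vector_mult_basis)
  then have "A$j$k = 0" by (metis column_def vec_lambda_beta zero_index)
  then show ?thesis using psd_symmetric_entry[OF assms(1)] by metis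
qed

lemma psd_schur_complement:
  fixes B :: "real^'n^'n"
  assumes B: "psd B" and pos: "0 < B$k$k"
  shows "psd (B - (\<chi> i j. B$k$i * B$k$j / B$k$k))"
proof -
  define a where "a = B$k$k"
  define M where "M = (\<chi> i j. B$k$i * B$k$j / B$k$k)"
  have symB: "transpose B = B" using B by (simp add: psd_def)
  have M: "x \<bullet> (M *v x) = (B$k \<bullet> x)\<^sup>2 / a" for x
  proof -
    have "x \<bullet> (M *v x) = (\<Sum>i\<in>UNIV. \<Sum>j\<in>UNIV. (x$i * B$k$i) * (B$k$j * x$j) / a)"
      by (simp add: inner_matrix_vector_mult_sum M_def a_def algebra_simps)
    also have "\<dots> = (B$k \<bullet> x)\<^sup>2 / a"
      by (simp add: sum_product[symmetric] sum_divide_distrib[symmetric] inner_vec_def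
          power2_eq_square mult.commute)
    finally show ?thesis .
  qed
  have sym: "transpose (B - M) = B - M"
    using psd_symmetric_entry[OF B] by (simp add: vec_eq_iff transpose_def M_def mult.commute)
  have "0 \<le> x \<bullet> ((B - M) *v x)" for x
  proof -
    define s where "s = - (B$k \<bullet> x) / a"
    have "0 \<le> (x + s *\<^sub>R axis k 1) \<bullet> (B *v (x + s *\<^sub>R axis k 1))"
      using B by (simp add: psd_def)
    also have "\<dots> = x \<bullet> (B *v x) + 2 * s * (B$k \<bullet> x) + s * s * a"
      unfolding symmetric_quadratic_form_add[OF symB] quadratic_form_scaleR quadratic_form_axis
      by (simp add: inner_axis' matrix_vector_mul_component a_def)
    also have "\<dots> = x \<bullet> (B *v x) - (B$k \<bullet> x)\<^sup>2 / a"
      using pos by (simp add: s_def a_def field_simps power2_eq_square)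
    also have "\<dots> = x \<bullet> ((B - M) *v x)"
      by (simp add: M matrix_vector_mult_diff_rdistrib inner_diff_right)
    finally show ?thesis .
  qed
  then show ?thesis using sym by (simp add: psd_def M_def)
qed

lemma sum_gram_fun_upd:
  fixes u :: "'m::finite \<Rightarrow> real^'n"
  assumes "u k = 0"
  shows "(\<Sum>m\<in>UNIV. (u(k := v)) m $ i * (u(k := v)) m $ j) =
    (\<Sum>m\<in>UNIV. u m $ i * u m $ j) + v$i * v$j"
proof -
  have "(u(k := v)) m $ i * (u(k := v)) m $ j =
      u m $ i * u m $ j + (if m = k then v$i * v$j else 0)" for m
    using assms by simp
  then show ?thesis by (simp add: sum.distrib)
qed

lemma psd_gram_factorization_supported:
  fixes B :: "real^'n^'n"
  assumes "finite S" "psd B" "\<And>i j. i \<notin> S \<Longrightarrow> B$i$j = 0"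
  shows "\<exists>u::'n \<Rightarrow> real^'n. (\<forall>m. m \<notin> S \<longrightarrow> u m = 0) \<and>
    (\<forall>i j. B$i$j = (\<Sum>m\<in>UNIV. u m $ i * u m $ j))"
  using assms
proof (induction S arbitrary: B rule: finite_induct)
  case empty
  then show ?case by (intro exI[of _ "\<lambda>_. 0"]) simp
next
  case (insert k S)
  show ?case
  proof (cases "B$k$k = 0")
    case True
    then have "B$i$j = 0" if "i \<notin> S" for i j
      using that insert.prems(2) psd_diagonal_eq_0_imp_row_eq_0[OF insert.prems(1) True]
      by (cases "i = k") auto
    then show ?thesis using insert.IH[OF insert.prems(1)] by blast
  next
    case False
    then have pos: "0 < B$k$k" using psd_diagonal_nonneg[OF insert.prems(1), of k] by linarith
    define B' where "B' = B - (\<chi> i j. B$k$i * B$k$j / B$k$k)"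
    have "psd B'" unfolding B'_def using insert.prems(1) pos by (rule psd_schur_complement)
    moreover have "B'$i$j = 0" if "i \<notin> S" for i j
    proof (cases "i = k")
      case False
      then have "B$i$j = 0" "B$k$i = 0"
        using that insert.prems(2) psd_symmetric_entry[OF insert.prems(1), of k i] by auto
      then show ?thesis by (simp add: B'_def)
    qed (use pos in \<open>simp add: B'_def\<close>)
    ultimately obtain u :: "'n \<Rightarrow> real^'n" where
      u0: "\<And>m. m \<notin> S \<Longrightarrow> u m = 0" and u: "\<And>i j. B'$i$j = (\<Sum>m\<in>UNIV. u m $ i * u m $ j)"
      using insert.IH by blast
    define v where "v = (1 / sqrt (B$k$k)) *\<^sub>R B$k"
    have "v$i * v$j = B$k$i * B$k$j / B$k$k" for i j
    proof -
      have "sqrt (B$k$k) * sqrt (B$k$k) = B$k$k" using pos by simp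
      then show ?thesis using pos by (simp add: v_def field_simps)
    qed
    then have "B$i$j = (\<Sum>m\<in>UNIV. (u(k := v)) m $ i * (u(k := v)) m $ j)" for i j
      unfolding sum_gram_fun_upd[of u k, OF u0[OF insert.hyps(2)]] u[symmetric] by (simp add: B'_def)
    moreover have "(u(k := v)) m = 0" if "m \<notin> insert k S" for m
      using that u0 by simp
    ultimately show ?thesis by blast
  qed
qed

lemma psd_gram_factorization:
  "psd (B::real^'n^'n) \<Longrightarrow> \<exists>u::'n \<Rightarrow> real^'n. \<forall>i j. B$i$j = (\<Sum>m\<in>UNIV. u m $ i * u m $ j)"
  using psd_gram_factorization_supported[of UNIV B] by auto

lemma frob_eq_sum: "frob A B = (\<Sum>i\<in>UNIV. \<Sum>j\<in>UNIV. A$i$j * B$j$i)"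
  by (simp add: frob_def trace_def matrix_matrix_mult_def)

lemma frob_gram:
  assumes "\<And>i j. Z$i$j = (\<Sum>m\<in>UNIV. u m $ i * u m $ j)"
  shows "frob A Z = (\<Sum>m\<in>UNIV. u m \<bullet> (A *v u m))"
proof -
  have "frob A Z = (\<Sum>i\<in>UNIV. \<Sum>j\<in>UNIV. \<Sum>m\<in>UNIV. u m $ i * A$i$j * u m $ j)"
    by (simp add: frob_eq_sum assms sum_distrib_left algebra_simps)
  also have "\<dots> = (\<Sum>i\<in>UNIV. \<Sum>m\<in>UNIV. \<Sum>j\<in>UNIV. u m $ i * A$i$j * u m $ j)"
    by (rule sum.cong[OF refl], rule sum.swap)
  also have "\<dots> = (\<Sum>m\<in>UNIV. \<Sum>i\<in>UNIV. \<Sum>j\<in>UNIV. u m $ i * A$i$j * u m $ j)"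
    by (rule sum.swap)
  finally show ?thesis by (simp add: inner_matrix_vector_mult_sum)
qed

lemma psd_frob_nonneg:
  fixes A Z :: "real^'n^'n"
  assumes "psd A" "psd Z"
  shows "0 \<le> frob A Z"
proof -
  obtain u :: "'n \<Rightarrow> real^'n" where "\<And>i j. Z$i$j = (\<Sum>m\<in>UNIV. u m $ i * u m $ j)"
    using psd_gram_factorization[OF assms(2)] by blast
  then show ?thesis using assms(1) by (simp add: frob_gram psd_def sum_nonneg)
qed

lemma psd_frob_eq_0_imp_mult_eq_0:
  fixes A Z :: "real^'n^'n"
  assumes A: "psd A" and Z: "psd Z" and 0: "frob A Z = 0"
  shows "A ** Z = 0"
proof -
  obtain u :: "'n \<Rightarrow> real^'n" where u: "\<And>i j. Z$i$j = (\<Sum>m\<in>UNIV. u m $ i * u m $ j)"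
    using psd_gram_factorization[OF Z] by blast
  have "u m \<bullet> (A *v u m) = 0" for m
    using 0 A by (simp add: frob_gram[OF u] psd_def sum_nonneg_eq_0_iff)
  then have kernel: "A *v u m = 0" for m
    using A psd_quadratic_form_eq_0_imp_kernel by blast
  have "(A ** Z)$i$j = 0" for i j
  proof -
    have "(A ** Z)$i$j = (\<Sum>l\<in>UNIV. \<Sum>m\<in>UNIV. A$i$l * u m $ l * u m $ j)"
      by (simp add: matrix_matrix_mult_def u sum_distrib_left mult.assoc)
    also have "\<dots> = (\<Sum>m\<in>UNIV. (A *v u m)$i * u m $ j)"
      by (subst sum.swap) (simp add: matrix_vector_mult_def sum_distrib_right)
    finally show ?thesis by (simp add: kernel)
  qed
  then show ?thesis by (simp add: vec_eq_iff)
qed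

lemma frob_diff_left: "frob (A - B) Z = frob A Z - frob B Z"
  by (simp add: frob_eq_sum sum_subtractf left_diff_distrib)

lemma frob_Diag: "frob (Diag v) Z = (\<Sum>i\<in>UNIV. v$i * Z$i$i)"
  by (simp add: frob_eq_sum Diag_def if_distrib if_distribR cong: if_cong)

lemma sdp_feasible_frob_Diag_minus:
  "sdp_feasible Z \<Longrightarrow> frob (Diag v - C) Z = (\<Sum>i\<in>UNIV. v$i) - frob C Z"
  by (simp add: frob_diff_left frob_Diag sdp_feasible_def)

definition sdp_perturb :: "real^'n^'n \<Rightarrow> real^'n \<Rightarrow> real \<Rightarrow> real^'n^'n" where
  "sdp_perturb Z x t =
    (\<chi> i j. sqrt (1 - t * (x$i)\<^sup>2) * Z$i$j * sqrt (1 - t * (x$j)\<^sup>2) + t * x$i * x$j)"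

lemma sdp_perturb_0 [simp]: "sdp_perturb Z x 0 = Z"
  by (simp add: sdp_perturb_def vec_eq_iff)

lemma sdp_feasible_perturb:
  fixes Z :: "real^'n^'n" and x :: "real^'n"
  assumes Z: "sdp_feasible Z" and t: "0 \<le> t" and tx: "t * (norm x)\<^sup>2 \<le> 1"
  shows "sdp_feasible (sdp_perturb Z x t)"
proof -
  define d where "d i = sqrt (1 - t * (x$i)\<^sup>2)" for i
  have Zpsd: "psd Z" and Zdiag: "\<And>i. Z$i$i = 1" using Z by (auto simp: sdp_feasible_def)
  have "t * (x$i)\<^sup>2 \<le> 1" for i
  proof -
    have "(x$i)\<^sup>2 \<le> (norm x)\<^sup>2"
      using component_le_norm_cart[of x i] by (metis abs_ge_zero power2_abs power_mono)
    then show ?thesis using t tx by (meson mult_left_mono order_trans)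
  qed
  then have diag: "sdp_perturb Z x t $ i $ i = 1" for i
    by (simp add: sdp_perturb_def Zdiag power2_eq_square)
  have sym: "transpose (sdp_perturb Z x t) = sdp_perturb Z x t"
    using psd_symmetric_entry[OF Zpsd]
    by (simp add: sdp_perturb_def vec_eq_iff transpose_def mult.commute)
  have "0 \<le> y \<bullet> (sdp_perturb Z x t *v y)" for y
  proof -
    define z where "z = (\<chi> i. d i * y$i)"
    have "y \<bullet> (sdp_perturb Z x t *v y) =
        (\<Sum>i\<in>UNIV. \<Sum>j\<in>UNIV. z$i * Z$i$j * z$j + t * ((x$i * y$i) * (x$j * y$j)))"
      by (simp add: inner_matrix_vector_mult_sum sdp_perturb_def z_def d_def algebra_simps)
    also have "\<dots> = z \<bullet> (Z *v z) + t * ((\<Sum>i\<in>UNIV. x$i * y$i) * (\<Sum>j\<in>UNIV. x$j * y$j))"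
      unfolding sum_product by (simp only: inner_matrix_vector_mult_sum sum.distrib sum_distrib_left)
    also have "\<dots> = z \<bullet> (Z *v z) + t * (x \<bullet> y)\<^sup>2"
      by (simp add: inner_vec_def power2_eq_square)
    finally have "y \<bullet> (sdp_perturb Z x t *v y) = z \<bullet> (Z *v z) + t * (x \<bullet> y)\<^sup>2" .
    then show ?thesis using Zpsd t by (simp add: psd_def)
  qed
  then show ?thesis using diag sym by (simp add: sdp_feasible_def psd_def)
qed

lemma DERIV_frob_sdp_perturb:
  fixes C Z :: "real^'n^'n" and x :: "real^'n"
  assumes symC: "transpose C = C" and symZ: "transpose Z = Z"
  shows "DERIV (\<lambda>t. frob C (sdp_perturb Z x t)) 0 :>
    x \<bullet> (C *v x) - (\<Sum>i\<in>UNIV. (C ** Z)$i$i * (x$i)\<^sup>2)"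
proof -
  define D where "D = (\<Sum>i\<in>UNIV. \<Sum>j\<in>UNIV. C$i$j *
      (- (x$j)\<^sup>2 / 2 * Z$j$i + Z$j$i * (- (x$i)\<^sup>2 / 2) + x$j * x$i))"
  define P where "P = (\<Sum>i\<in>UNIV. (C ** Z)$i$i * (x$i)\<^sup>2)"
  have der: "DERIV (\<lambda>t. frob C (sdp_perturb Z x t)) 0 :> D"
    unfolding frob_eq_sum sdp_perturb_def D_def vec_lambda_beta
    by (rule derivative_eq_intros refl | simp)+ (simp add: algebra_simps)
  have P1: "(\<Sum>i\<in>UNIV. \<Sum>j\<in>UNIV. C$i$j * Z$j$i * (x$i)\<^sup>2) = P"
    by (simp add: P_def matrix_matrix_mult_def sum_distrib_right)
  have "(\<Sum>i\<in>UNIV. \<Sum>j\<in>UNIV. C$i$j * Z$j$i * (x$j)\<^sup>2) =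
      (\<Sum>j\<in>UNIV. \<Sum>i\<in>UNIV. C$j$i * Z$i$j * (x$j)\<^sup>2)"
    by (subst sum.swap) (simp only: symmetric_matrix_entry[OF symC] symmetric_matrix_entry[OF symZ])
  with P1 have P2: "(\<Sum>i\<in>UNIV. \<Sum>j\<in>UNIV. C$i$j * Z$j$i * (x$j)\<^sup>2) = P"
    by simp
  have "D = (\<Sum>i\<in>UNIV. \<Sum>j\<in>UNIV. x$i * C$i$j * x$j
      - C$i$j * Z$j$i * (x$j)\<^sup>2 / 2 - C$i$j * Z$j$i * (x$i)\<^sup>2 / 2)"
    unfolding D_def by (intro sum.cong refl) (simp add: algebra_simps)
  also have "\<dots> = x \<bullet> (C *v x) - (\<Sum>i\<in>UNIV. \<Sum>j\<in>UNIV. C$i$j * Z$j$i * (x$j)\<^sup>2) / 2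
      - (\<Sum>i\<in>UNIV. \<Sum>j\<in>UNIV. C$i$j * Z$j$i * (x$i)\<^sup>2) / 2"
    by (simp only: inner_matrix_vector_mult_sum sum_subtractf sum_divide_distrib)
  also have "\<dots> = x \<bullet> (C *v x) - P"
    by (simp add: P1 P2)
  finally show ?thesis using der by (simp add: P_def)
qed

lemma DERIV_nonpos_at_right_local_max:
  fixes f :: "real \<Rightarrow> real"
  assumes "DERIV f x :> D" and "0 < \<delta>" and "\<And>h. 0 < h \<Longrightarrow> h < \<delta> \<Longrightarrow> f (x + h) \<le> f x"
  shows "D \<le> 0"
proof (rule ccontr)
  assume "\<not> D \<le> 0"
  then obtain d where "0 < d" and inc: "\<And>h. 0 < h \<Longrightarrow> h < d \<Longrightarrow> f x < f (x + h)"
    using DERIV_pos_inc_right[OF assms(1)] by force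
  define h where "h = min d \<delta> / 2"
  have "0 < h" "h < d" "h < \<delta>" using \<open>0 < d\<close> assms(2) by (auto simp: h_def)
  then show False using inc assms(3) by force
qed

lemma sdp_optimal_first_order:
  fixes C Z :: "real^'n^'n" and x :: "real^'n"
  assumes symC: "transpose C = C" and feasZ: "sdp_feasible Z"
    and optZ: "\<forall>Y. sdp_feasible Y \<longrightarrow> frob C Y \<le> frob C Z"
  shows "x \<bullet> (C *v x) \<le> (\<Sum>i\<in>UNIV. (C ** Z)$i$i * (x$i)\<^sup>2)"
proof -
  define \<delta> where "\<delta> = 1 / (1 + (norm x)\<^sup>2)"
  have \<delta>: "0 < \<delta>" by (simp add: \<delta>_def add_pos_nonneg)
  have "frob C (sdp_perturb Z x (0 + h)) \<le> frob C (sdp_perturb Z x 0)" if "0 < h" "h < \<delta>" for h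
  proof -
    have "h * (1 + (norm x)\<^sup>2) < 1"
      using that by (simp add: \<delta>_def less_divide_eq add_pos_nonneg)
    then have "h * (norm x)\<^sup>2 \<le> 1" using \<open>0 < h\<close> by (simp add: algebra_simps)
    then show ?thesis using optZ sdp_feasible_perturb[OF feasZ] that by simp
  qed
  moreover have "transpose Z = Z" using feasZ by (simp add: sdp_feasible_def psd_def)
  ultimately show ?thesis
    using DERIV_nonpos_at_right_local_max[OF DERIV_frob_sdp_perturb[OF symC] \<delta>] by simp
qed

lemma sdp_optimal_dual_feasible:
  fixes C Z :: "real^'n^'n"
  assumes symC: "transpose C = C" and feasZ: "sdp_feasible Z"
    and optZ: "\<forall>Y. sdp_feasible Y \<longrightarrow> frob C Y \<le> frob C Z"
  shows "psd (Diag (\<chi> i. (C ** Z)$i$i) - C)"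
  using sdp_optimal_first_order[OF assms] transpose_Diag_minus[OF symC]
  by (simp add: psd_def matrix_vector_mult_diff_rdistrib inner_diff_right quadratic_form_Diag)

lemma complementary_slackness_column:
  fixes C Z :: "real^'n^'n"
  assumes symC: "transpose C = C" and symZ: "transpose Z = Z"
    and slack: "(Diag \<mu> - C) ** Z = 0"
  shows "Z *v column i C = \<mu>$i *\<^sub>R column i Z"
proof -
  have "(Z *v column i C)$j = (C ** Z)$i$j" for j
    using symmetric_matrix_entry[OF symC] symmetric_matrix_entry[OF symZ]
    by (simp add: matrix_vector_mult_def column_def matrix_matrix_mult_def mult.commute)
  also have "(C ** Z)$i$j = \<mu>$i * Z$i$j" for j
  proof -
    have "(Diag \<mu> - C) ** Z = Diag \<mu> ** Z - C ** Z"
      by (simp add: matrix_matrix_mult_def vec_eq_iff sum_subtractf left_diff_distrib)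
    then have "C ** Z = Diag \<mu> ** Z" using slack by simp
    then show ?thesis by (metis Diag_mult_matrix_entry)
  qed
  finally show ?thesis
    using symmetric_matrix_entry[OF symZ] by (simp add: vec_eq_iff column_def)
qed

theorem lemmaC1:
  fixes C Z :: "real^'n^'n" and w :: "real^'n"
  assumes symC: "transpose C = C"
    and feasZ: "sdp_feasible Z"
    and optZ: "\<forall>Y. sdp_feasible Y \<longrightarrow> frob C Y \<le> frob C Z"
    and w_def: "w = (\<chi> i. (column i Z \<bullet> (Z *v column i C)) / (column i Z \<bullet> column i Z))"
  shows "psd (Diag w - C) \<and>
         (\<forall>v::real^'n. psd (Diag v - C) \<longrightarrow> (\<Sum>i\<in>UNIV. w $ i) \<le> (\<Sum>i\<in>UNIV. v $ i))"
proof -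
  define \<mu> where "\<mu> = (\<chi> i. (C ** Z)$i$i)"
  have Zpsd: "psd Z" and Zdiag: "\<And>i. Z$i$i = 1" using feasZ by (auto simp: sdp_feasible_def)
  have dual: "psd (Diag \<mu> - C)"
    unfolding \<mu>_def using symC feasZ optZ by (rule sdp_optimal_dual_feasible)
  have sum_\<mu>: "(\<Sum>i\<in>UNIV. \<mu>$i) = frob C Z"
    by (simp add: \<mu>_def frob_def trace_def)
  then have "frob (Diag \<mu> - C) Z = 0" by (simp add: sdp_feasible_frob_Diag_minus[OF feasZ])
  then have "(Diag \<mu> - C) ** Z = 0" using dual Zpsd psd_frob_eq_0_imp_mult_eq_0 by blast
  then have eigen: "Z *v column i C = \<mu>$i *\<^sub>R column i Z" for i
    using symC Zpsd by (intro complementary_slackness_column) (auto simp: psd_def)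
  have "column i Z \<noteq> 0" for i
    using Zdiag[of i] by (metis column_def vec_lambda_beta zero_index zero_neq_one)
  then have "w = \<mu>" by (simp add: w_def eigen vec_eq_iff)
  moreover have "(\<Sum>i\<in>UNIV. \<mu>$i) \<le> (\<Sum>i\<in>UNIV. v$i)" if "psd (Diag v - C)" for v
    using psd_frob_nonneg[OF that Zpsd] sum_\<mu> by (simp add: sdp_feasible_frob_Diag_minus[OF feasZ])
  ultimately show ?thesis using dual by simp
qed

end
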